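(* For every positive integer $n$, the number of symmetric gapsets in $\mathcal{G}_{2n}(3n+1)$ is $2^{n-1}$.
   Context: A gapset is a finite set $G\subset\mathbb{N}=\{1,2,\dots\}$ such that whenever $z\in G$ and $z=x+y$ with $x,y\in\mathbb{N}$, then $x\in G$ or $y\in G$; its genus is $g=\#G$. Writing $G=\{\ell_1<\dots<\ell_g\}$, the Frobenius number is $F(G)=\ell_g$; $G$ is symmetric if $F(G)=2g-1$. $G$ is pure $\kappa$-sparse if $\ell_{i+1}-\ell_i\le\kappa$ for all $i$ with equality for some $i$; $\mathcal{G}_\kappa(g)$ is the set of pure $\kappa$-sparse gapsets of genus $g$. *)

theory Defs
  imports Main
begin

definition gapset :: "nat set \<Rightarrow> bool" where
  "gapset G \<longleftrightarrow> finite G \<and> 0 \<notin> G \<and>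
     (\<forall>z\<in>G. \<forall>x y. 0 < x \<and> 0 < y \<and> z = x + y \<longrightarrow> x \<in> G \<or> y \<in> G)"

definition genus :: "nat set \<Rightarrow> nat" where
  "genus G = card G"

definition frobenius :: "nat set \<Rightarrow> nat" where
  "frobenius G = Max G"

definition symmetric_gapset :: "nat set \<Rightarrow> bool" where
  "symmetric_gapset G \<longleftrightarrow> frobenius G = 2 * genus G - 1"

definition pure_sparse :: "nat \<Rightarrow> nat set \<Rightarrow> bool" where
  "pure_sparse \<kappa> G \<longleftrightarrow>
     (let l = sorted_list_of_set G in
       (\<forall>i. i + 1 < length l \<longrightarrow> l ! (i + 1) - l ! i \<le> \<kappa>) \<and>
       (\<exists>i. i + 1 < length l \<and> l ! (i + 1) - l ! i = \<kappa>))"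

definition pure_sparse_gapsets :: "nat \<Rightarrow> nat \<Rightarrow> nat set set" where
  "pure_sparse_gapsets \<kappa> g = {G. gapset G \<and> pure_sparse \<kappa> G \<and> genus G = g}"

end

theory Submission
  imports Defs
begin

text \<open>
  If the genus is \<open>3n+1\<close>, symmetry means that the Frobenius number is \<open>F = 6n+1\<close> and that
  \<open>G\<close> contains exactly one of \<open>x\<close> and \<open>F - x\<close> for every \<open>x \<le> F\<close>. Two consecutive elements
  \<open>a < a + 2n\<close> of \<open>G\<close> force \<open>1, \<dots>, 2n-1\<close> into \<open>G\<close> (write \<open>a + 2n = k + (a + 2n - k)\<close>),
  so by symmetry \<open>4n+2, \<dots>, 6n\<close> are missing; since the predecessor of \<open>F\<close> in \<open>G\<close> is at
  distance at most \<open>2n\<close>, it must be \<open>4n+1\<close>. Hence \<open>2n\<close> is missing, so is \<open>4n = 2n + 2n\<close>, and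
  \<open>2n+1\<close> is present. What remains free is \<open>A = G \<inter> [2n+2, 3n]\<close>, whose mirror image under
  \<open>x \<mapsto> F - x\<close> is the complement of \<open>G\<close> in \<open>[3n+1, 4n-1]\<close>; conversely every choice of \<open>A\<close>
  gives a symmetric pure \<open>2n\<close>-sparse gapset, so there are \<open>2^(n-1)\<close> of them.
\<close>

definition consecutive :: "'a::linorder set \<Rightarrow> 'a \<Rightarrow> 'a \<Rightarrow> bool" where
  "consecutive G a b \<longleftrightarrow> a \<in> G \<and> b \<in> G \<and> a < b \<and> (\<forall>y. a < y \<and> y < b \<longrightarrow> y \<notin> G)"

lemma strict_sorted_nth_less_iff:
  fixes xs :: "'a::linorder list"
  assumes "sorted_wrt (<) xs" "i < length xs" "j < length xs"
  shows "xs ! i < xs ! j \<longleftrightarrow> i < j"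
proof
  assume lt: "xs ! i < xs ! j"
  show "i < j"
  proof (rule ccontr)
    assume "\<not> i < j"
    then consider "i = j" | "j < i" by linarith
    then show False
      using lt sorted_wrt_nth_less[OF assms(1) _ assms(2), of j] by cases auto
  qed
qed (rule sorted_wrt_nth_less[OF assms(1) _ assms(3)])

lemma consecutive_iff_adjacent_in_sorted_list:
  assumes "finite G"
  defines "l \<equiv> sorted_list_of_set G"
  shows "consecutive G a b \<longleftrightarrow> (\<exists>i. i + 1 < length l \<and> l ! i = a \<and> l ! (i + 1) = b)"
proof -
  have set_l: "set l = G" and sorted_l: "sorted_wrt (<) l"
    using assms(1) by (simp_all add: l_def)
  have index: "\<exists>i<length l. l ! i = x" if "x \<in> G" for x
    using that set_l by (auto simp: in_set_conv_nth)
  show ?thesis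
  proof
    assume ab: "consecutive G a b"
    then have "a \<in> G" "b \<in> G" by (simp_all add: consecutive_def)
    then obtain i j where i: "i < length l" "l ! i = a" and j: "j < length l" "l ! j = b"
      using index by meson
    have "i < j"
      using ab i j strict_sorted_nth_less_iff[OF sorted_l i(1) j(1)] by (simp add: consecutive_def)
    moreover have "\<not> i + 1 < j"
    proof
      assume "i + 1 < j"
      then have "a < l ! (i + 1)" "l ! (i + 1) < b" "l ! (i + 1) \<in> G"
        using i j sorted_wrt_nth_less[OF sorted_l] set_l nth_mem[of "i + 1" l] by auto
      then show False using ab by (simp add: consecutive_def)
    qed
    ultimately have "j = i + 1" by simp
    then show "\<exists>i. i + 1 < length l \<and> l ! i = a \<and> l ! (i + 1) = b"
      using i j by blast
  next
    assume "\<exists>i. i + 1 < length l \<and> l ! i = a \<and> l ! (i + 1) = b"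
    then obtain i where i: "i + 1 < length l" "l ! i = a" "l ! (i + 1) = b" by blast
    have "y \<notin> G" if "a < y" "y < b" for y
    proof
      assume "y \<in> G"
      then obtain j where j: "j < length l" "l ! j = y" using index by blast
      have "i < length l" using i(1) by simp
      then have "i < j" "j < i + 1"
        using that i j strict_sorted_nth_less_iff[OF sorted_l] by auto
      then show False by simp
    qed
    moreover have "a < b" using i sorted_wrt_nth_less[OF sorted_l, of i "i + 1"] by simp
    ultimately show "consecutive G a b"
      using i set_l by (auto simp: consecutive_def)
  qed
qed

lemma pure_sparse_iff_consecutive:
  assumes "finite G"
  shows "pure_sparse \<kappa> G \<longleftrightarrow>
    (\<forall>a b. consecutive G a b \<longrightarrow> b - a \<le> \<kappa>) \<and> (\<exists>a b. consecutive G a b \<and> b - a = \<kappa>)"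
  unfolding pure_sparse_def Let_def consecutive_iff_adjacent_in_sorted_list[OF assms] by auto

lemma consecutive_predecessor:
  assumes "finite G" "x \<in> G" "z \<in> G" "z < x"
  obtains y where "consecutive G y x"
proof
  let ?B = "{y \<in> G. y < x}"
  have "Max ?B \<in> ?B"
    using assms by (intro Max_in) auto
  moreover have "y \<le> Max ?B" if "y \<in> ?B" for y
    using assms(1) that by simp
  ultimately show "consecutive G (Max ?B) x"
    using assms(2) unfolding consecutive_def by (metis (mono_tags, lifting) mem_Collect_eq not_le)
qed

lemma gapset_contains_below_gap:
  assumes "gapset G" "consecutive G a b" "0 < k" "k < b - a"
  shows "k \<in> G"
proof -
  have "a < b - k" "b - k < b" "b = (b - k) + k"
    using assms(3,4) by auto
  then have "b - k \<notin> G"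
    using assms(2) by (simp add: consecutive_def)
  moreover have "b - k \<in> G \<or> k \<in> G"
    using assms(1-3) \<open>b = (b - k) + k\<close> \<open>a < b - k\<close> unfolding gapset_def consecutive_def
    by (metis gr0I not_less0)
  ultimately show ?thesis by simp
qed

lemma symmetric_gapset_mem_iff:
  assumes "gapset G" "G \<noteq> {}" "symmetric_gapset G" "x \<le> frobenius G"
  shows "x \<in> G \<longleftrightarrow> frobenius G - x \<notin> G"
proof -
  define F where "F = frobenius G"
  have fin: "finite G" using assms(1) by (simp add: gapset_def)
  have F_mem: "F \<in> G" and G_le: "G \<subseteq> {0..F}"
    using fin assms(2) by (auto simp: F_def frobenius_def)
  have one_of_pair: "y \<in> G \<or> F - y \<in> G" if "y \<le> F" for y
  proof (cases "y = 0 \<or> y = F")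
    case False
    then have "0 < y" "0 < F - y" "F = y + (F - y)" using that by auto
    then show ?thesis using assms(1) F_mem unfolding gapset_def by blast
  qed (use F_mem in auto)
  define N where "N = {0..F} - G"
  have "card N = card {0..F} - card G"
    unfolding N_def using G_le fin by (simp add: card_Diff_subset)
  also have "\<dots> = card G"
    using assms(3) fin assms(2) card_gt_0_iff[of G]
    by (simp add: F_def symmetric_gapset_def genus_def)
  finally have card_N: "card N = card G" .
  have inj: "inj_on (\<lambda>y. F - y) N" unfolding N_def by (auto simp: inj_on_def)
  have "(\<lambda>y. F - y) ` N \<subseteq> G"
  proof
    fix w assume "w \<in> (\<lambda>y. F - y) ` N"
    then obtain y where "y \<le> F" "y \<notin> G" "w = F - y" unfolding N_def by auto
    then show "w \<in> G" using one_of_pair by blast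
  qed
  with card_N have mirror_N: "(\<lambda>y. F - y) ` N = G"
    by (simp add: card_image[OF inj] card_subset_eq[OF fin])
  show ?thesis
    unfolding F_def[symmetric]
  proof
    assume "x \<in> G"
    show "F - x \<notin> G"
    proof
      assume "F - x \<in> G"
      then have "F - x \<in> (\<lambda>y. F - y) ` N" using mirror_N by simp
      then obtain y where "y \<le> F" "y \<notin> G" "F - x = F - y"
        unfolding N_def by auto
      then have "y = x" using assms(4) F_def by (metis diff_diff_cancel)
      then show False using \<open>x \<in> G\<close> \<open>y \<notin> G\<close> by simp
    qed
  next
    assume "F - x \<notin> G" then show "x \<in> G" using one_of_pair assms(4) F_def by blast
  qed
qed

definition sparse_symmetric_gapset :: "nat \<Rightarrow> nat set \<Rightarrow> nat set" where
  "sparse_symmetric_gapset n A =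
     {1..<2*n} \<union> {2*n+1, 4*n+1, 6*n+1} \<union> A \<union> (\<lambda>x. 6*n+1 - x) ` ({2*n+2..3*n} - A)"

lemma mem_sparse_symmetric_gapset:
  assumes "A \<subseteq> {2*n+2..3*n}"
  shows "z \<in> sparse_symmetric_gapset n A \<longleftrightarrow>
    (1 \<le> z \<and> z < 2*n) \<or> z = 2*n+1 \<or> z = 4*n+1 \<or> z = 6*n+1 \<or> z \<in> A \<or>
    (3*n+1 \<le> z \<and> z < 4*n \<and> 6*n+1 - z \<notin> A)"
proof -
  have "z \<in> (\<lambda>x. 6*n+1 - x) ` ({2*n+2..3*n} - A) \<longleftrightarrow> 3*n+1 \<le> z \<and> z < 4*n \<and> 6*n+1 - z \<notin> A"
  proof
    assume "z \<in> (\<lambda>x. 6*n+1 - x) ` ({2*n+2..3*n} - A)"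
    then obtain x where "x \<in> {2*n+2..3*n}" "x \<notin> A" "z = 6*n+1 - x" by blast
    moreover have "6*n+1 - (6*n+1 - x) = x" using \<open>x \<in> {2*n+2..3*n}\<close> by simp
    ultimately show "3*n+1 \<le> z \<and> z < 4*n \<and> 6*n+1 - z \<notin> A" by auto
  next
    assume z: "3*n+1 \<le> z \<and> z < 4*n \<and> 6*n+1 - z \<notin> A"
    then have "6*n+1 - z \<in> {2*n+2..3*n} - A" "z = 6*n+1 - (6*n+1 - z)" by auto
    then show "z \<in> (\<lambda>x. 6*n+1 - x) ` ({2*n+2..3*n} - A)" by blast
  qed
  then show ?thesis
    unfolding sparse_symmetric_gapset_def by auto
qed

lemma sparse_symmetric_gapset_subset:
  assumes "A \<subseteq> {2*n+2..3*n}"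
  shows "sparse_symmetric_gapset n A \<subseteq> {1..6*n+1}"
  using assms by (force simp: mem_sparse_symmetric_gapset)

lemma sparse_symmetric_gapset_Int:
  assumes "A \<subseteq> {2*n+2..3*n}"
  shows "sparse_symmetric_gapset n A \<inter> {2*n+2..3*n} = A"
  using assms by (auto simp: mem_sparse_symmetric_gapset)

lemma card_sparse_symmetric_gapset:
  assumes "n \<ge> 1" "A \<subseteq> {2*n+2..3*n}"
  shows "card (sparse_symmetric_gapset n A) = 3*n+1"
proof -
  define I where "I = {2*n+2..3*n}"
  define P where "P = {2*n+1, 4*n+1, 6*n+1}"
  define M where "M = (\<lambda>x. 6*n+1 - x) ` (I - A)"
  have A_I: "A \<subseteq> I" and fin_A: "finite A"
    using assms(2) finite_subset unfolding I_def by auto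
  have M_sub: "M \<subseteq> {3*n+1..<4*n}" unfolding M_def I_def by auto
  have inj: "inj_on (\<lambda>x. 6*n+1 - x) (I - A)" unfolding I_def inj_on_def by auto
  have "card M = card I - card A"
    unfolding M_def card_image[OF inj] using A_I fin_A by (simp add: card_Diff_subset)
  moreover have "card A \<le> card I" using card_mono[OF _ A_I] by (simp add: I_def)
  moreover have "card I = n - 1" unfolding I_def by simp
  moreover have "card P = 3" using assms(1) by (simp add: P_def)
  moreover have "card ({1..<2*n} \<union> P \<union> A \<union> M) = card {1..<2*n} + card P + card A + card M"
  proof -
    have "finite M" "finite P" using M_sub finite_subset by (auto simp: P_def)
    moreover have "{1..<2*n} \<inter> P = {}" "({1..<2*n} \<union> P) \<inter> A = {}" "({1..<2*n} \<union> P \<union> A) \<inter> M = {}"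
      using A_I M_sub unfolding P_def I_def subset_iff by fastforce+
    ultimately show ?thesis using fin_A by (simp add: card_Un_disjoint)
  qed
  ultimately show ?thesis
    unfolding sparse_symmetric_gapset_def I_def[symmetric] P_def[symmetric] M_def[symmetric]
    using assms(1) by simp
qed

lemma finite_sparse_symmetric_gapset:
  assumes "A \<subseteq> {2*n+2..3*n}"
  shows "finite (sparse_symmetric_gapset n A)"
  using sparse_symmetric_gapset_subset[OF assms] finite_subset by blast

lemma Max_sparse_symmetric_gapset:
  assumes "A \<subseteq> {2*n+2..3*n}"
  shows "Max (sparse_symmetric_gapset n A) = 6*n+1"
  using sparse_symmetric_gapset_subset[OF assms] finite_sparse_symmetric_gapset[OF assms]
  by (intro Max_eqI) (auto simp: mem_sparse_symmetric_gapset[OF assms])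

lemma gapset_sparse_symmetric_gapset:
  assumes n: "n \<ge> 1" and A: "A \<subseteq> {2*n+2..3*n}"
  shows "gapset (sparse_symmetric_gapset n A)"
  unfolding gapset_def
proof (intro conjI ballI allI impI)
  let ?S = "sparse_symmetric_gapset n A"
  note mem = mem_sparse_symmetric_gapset[OF A]
  show "finite ?S" using finite_sparse_symmetric_gapset[OF A] .
  show "0 \<notin> ?S" using sparse_symmetric_gapset_subset[OF A] by auto
  have large: "2*n \<le> w" if "0 < w" "w \<notin> ?S" for w
  proof (rule ccontr)
    assume "\<not> 2*n \<le> w"
    then have "w \<in> ?S" using that(1) by (simp add: mem)
    with that(2) show False by simp
  qed
  have no_split: False if "v + w = 6*n+1" "v \<notin> ?S" "w \<notin> ?S" "0 < v" "v \<le> 3*n" for v w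
  proof -
    have "v \<noteq> 2*n+1" using that(2) by (auto simp: mem)
    moreover have "v \<noteq> 2*n"
    proof
      assume "v = 2*n"
      then have "w = 4*n+1" using that(1) by simp
      with that(3) show False by (simp add: mem)
    qed
    ultimately have "2*n+2 \<le> v" using large[OF that(4,2)] by simp
    moreover have "v \<notin> A" "6*n+1 - w = v" using that(1,2) by (auto simp: mem)
    ultimately have "w \<in> ?S" using that(1,5) by (simp add: mem)
    with that(3) show False by simp
  qed
  fix z x y assume z: "z \<in> ?S" and xy: "0 < x \<and> 0 < y \<and> z = x + y"
  show "x \<in> ?S \<or> y \<in> ?S"
  proof (rule ccontr)
    assume "\<not> (x \<in> ?S \<or> y \<in> ?S)"
    then have x: "x \<notin> ?S" and y: "y \<notin> ?S" by auto
    have "2*n \<le> x" "2*n \<le> y" using large x y xy by auto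
    then have "4*n \<le> z" "z \<notin> A" using A xy by auto
    then consider "z = 4*n+1" | "z = 6*n+1"
      using z unfolding mem by auto
    then show False
    proof cases
      case 1
      then have "x = 2*n+1 \<or> y = 2*n+1" using \<open>2*n \<le> x\<close> \<open>2*n \<le> y\<close> xy by linarith
      then show False using x y by (auto simp: mem)
    next
      case 2
      then consider "x \<le> 3*n" | "y \<le> 3*n" using xy by linarith
      then show False
      proof cases
        case 1
        show False by (rule no_split[of x y]) (use 1 2 x y xy in auto)
      next
        case 2
        show False by (rule no_split[of y x]) (use 2 \<open>z = 6*n+1\<close> x y xy in auto)
      qed
    qed
  qed
qed

lemma pure_sparse_sparse_symmetric_gapset:
  assumes n: "n \<ge> 1" and A: "A \<subseteq> {2*n+2..3*n}"
  shows "pure_sparse (2*n) (sparse_symmetric_gapset n A)"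
proof -
  let ?S = "sparse_symmetric_gapset n A"
  note mem = mem_sparse_symmetric_gapset[OF A]
  have near_predecessor: "\<exists>p\<in>?S. p < b \<and> b \<le> p + 2*n" if b: "b \<in> ?S" "2 \<le> b" for b
  proof -
    consider "b < 2*n" | "b = 2*n+1" | "2*n+2 \<le> b \<and> b \<le> 4*n+1" | "b = 6*n+1"
      using b A unfolding mem by fastforce
    then show ?thesis
    proof cases
      case 1
      then have "1 \<le> b - 1 \<and> b - 1 < 2*n" using b by linarith
      then have "b - 1 \<in> ?S" by (simp add: mem)
      then show ?thesis using b n by (intro bexI[of _ "b - 1"]) auto
    next
      case 2
      have "1 \<le> 2*n - 1 \<and> 2*n - 1 < 2*n" using n by linarith
      then have "2*n - 1 \<in> ?S" by (simp add: mem)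
      then show ?thesis using 2 n by (intro bexI[of _ "2*n - 1"]) auto
    next
      case 3
      have "2*n + 1 \<in> ?S" by (simp add: mem)
      then show ?thesis using 3 by (intro bexI[of _ "2*n + 1"]) auto
    next
      case 4
      have "4*n + 1 \<in> ?S" by (simp add: mem)
      then show ?thesis using 4 n by (intro bexI[of _ "4*n + 1"]) auto
    qed
  qed
  have "b - a \<le> 2*n" if "consecutive ?S a b" for a b
  proof -
    have "1 \<le> a" "a < b" "b \<in> ?S" "a \<in> ?S"
      using that sparse_symmetric_gapset_subset[OF A] by (auto simp: consecutive_def)
    then obtain p where "p \<in> ?S" "p < b" "b \<le> p + 2*n" using near_predecessor by fastforce
    moreover have "p \<le> a" using that \<open>p \<in> ?S\<close> \<open>p < b\<close> unfolding consecutive_def by (meson not_le)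
    ultimately show ?thesis by linarith
  qed
  moreover have "consecutive ?S (4*n+1) (6*n+1)"
    using A n by (auto simp: consecutive_def mem)
  ultimately show ?thesis
    using pure_sparse_iff_consecutive[OF finite_sparse_symmetric_gapset[OF A]] by fastforce
qed

lemma symmetric_sparse_gapset_eq:
  assumes n: "n \<ge> 1" and G: "G \<in> pure_sparse_gapsets (2*n) (3*n+1)" and sym: "symmetric_gapset G"
  shows "G = sparse_symmetric_gapset n (G \<inter> {2*n+2..3*n})"
proof -
  have gap: "gapset G" and sparse: "pure_sparse (2*n) G" and card_G: "card G = 3*n+1"
    using G by (auto simp: pure_sparse_gapsets_def genus_def)
  have fin: "finite G" and no_0: "0 \<notin> G" using gap by (auto simp: gapset_def)
  have nonempty: "G \<noteq> {}" using card_G by auto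
  have F: "frobenius G = 6*n+1" using sym card_G by (simp add: symmetric_gapset_def genus_def)
  have F_mem: "6*n+1 \<in> G" using Max_in[OF fin nonempty] F by (simp add: frobenius_def)
  have above: "x \<notin> G" if "6*n+1 < x" for x
    using Max_ge[OF fin, of x] F that by (auto simp: frobenius_def)
  have mirror: "x \<in> G \<longleftrightarrow> 6*n+1 - x \<notin> G" if "x \<le> 6*n+1" for x
    using symmetric_gapset_mem_iff[OF gap nonempty sym, of x] that unfolding F by blast
  from sparse obtain a b where "consecutive G a b" "b - a = 2*n"
    unfolding pure_sparse_iff_consecutive[OF fin] by blast
  then have low: "k \<in> G" if "0 < k" "k < 2*n" for k
    using gapset_contains_below_gap[OF gap] that by auto
  have high_gap: "x \<notin> G" if "4*n+2 \<le> x" "x \<le> 6*n" for x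
    using mirror[of x] low[of "6*n+1 - x"] that by simp
  obtain p where p: "consecutive G p (6*n+1)"
    using consecutive_predecessor[OF fin F_mem low[of 1]] n by auto
  then have "6*n+1 - p \<le> 2*n" "p \<in> G" "p < 6*n+1"
    using sparse pure_sparse_iff_consecutive[OF fin] by (auto simp: consecutive_def)
  then have mem_4n1: "4*n+1 \<in> G" using high_gap[of p] by (cases "p = 4*n+1") auto
  have not_2n: "2*n \<notin> G" using mirror[of "2*n"] mem_4n1 by simp
  have not_4n: "4*n \<notin> G"
  proof
    assume "4*n \<in> G"
    moreover have "4*n = 2*n + 2*n" "0 < 2*n" using n by auto
    ultimately have "2*n \<in> G" using gap unfolding gapset_def by blast
    with not_2n show False by simp
  qed
  have mem_2n1: "2*n+1 \<in> G" using mirror[of "2*n+1"] not_4n by simp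
  show ?thesis
  proof (rule set_eqI)
    fix z
    let ?A = "G \<inter> {2*n+2..3*n}"
    have mem: "z \<in> sparse_symmetric_gapset n ?A \<longleftrightarrow>
      (1 \<le> z \<and> z < 2*n) \<or> z = 2*n+1 \<or> z = 4*n+1 \<or> z = 6*n+1 \<or> z \<in> ?A \<or>
      (3*n+1 \<le> z \<and> z < 4*n \<and> 6*n+1 - z \<notin> ?A)"
      by (rule mem_sparse_symmetric_gapset) simp
    consider "z = 0" | "1 \<le> z \<and> z < 2*n" | "z = 2*n" | "z = 2*n+1" | "2*n+2 \<le> z \<and> z \<le> 3*n"
      | "3*n+1 \<le> z \<and> z < 4*n" | "z = 4*n" | "z = 4*n+1" | "4*n+2 \<le> z \<and> z \<le> 6*n"
      | "z = 6*n+1" | "6*n+1 < z"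
      by linarith
    then show "z \<in> G \<longleftrightarrow> z \<in> sparse_symmetric_gapset n ?A"
    proof cases
      case 1 then show ?thesis using no_0 unfolding mem by simp
    next
      case 2 then show ?thesis using low unfolding mem by simp
    next
      case 3 then show ?thesis using not_2n n unfolding mem by simp
    next
      case 4 then show ?thesis using mem_2n1 unfolding mem by simp
    next
      case 5 then show ?thesis unfolding mem by simp
    next
      case 6
      then have "z \<in> G \<longleftrightarrow> 6*n+1 - z \<notin> ?A" using mirror[of z] by auto
      with 6 show ?thesis unfolding mem by simp
    next
      case 7 then show ?thesis using not_4n n unfolding mem by simp
    next
      case 8 then show ?thesis using mem_4n1 unfolding mem by simp
    next
      case 9 then show ?thesis using high_gap unfolding mem by simp
    next
      case 10 then show ?thesis using F_mem unfolding mem by simp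
    next
      case 11 then show ?thesis using above unfolding mem by simp
    qed
  qed
qed

lemma symmetric_pure_sparse_gapsets_eq_image:
  assumes n: "n \<ge> 1"
  shows "{G \<in> pure_sparse_gapsets (2*n) (3*n+1). symmetric_gapset G} =
    sparse_symmetric_gapset n ` Pow {2*n+2..3*n}"
proof (intro equalityI subsetI)
  fix G assume "G \<in> {G \<in> pure_sparse_gapsets (2*n) (3*n+1). symmetric_gapset G}"
  then have "G = sparse_symmetric_gapset n (G \<inter> {2*n+2..3*n})"
    using symmetric_sparse_gapset_eq[OF n] by blast
  then show "G \<in> sparse_symmetric_gapset n ` Pow {2*n+2..3*n}" by blast
next
  fix G assume "G \<in> sparse_symmetric_gapset n ` Pow {2*n+2..3*n}"
  then obtain A where A: "A \<subseteq> {2*n+2..3*n}" and G: "G = sparse_symmetric_gapset n A" by blast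
  show "G \<in> {G \<in> pure_sparse_gapsets (2*n) (3*n+1). symmetric_gapset G}"
    using G card_sparse_symmetric_gapset[OF n A] Max_sparse_symmetric_gapset[OF A]
      gapset_sparse_symmetric_gapset[OF n A] pure_sparse_sparse_symmetric_gapset[OF n A]
    by (simp add: pure_sparse_gapsets_def symmetric_gapset_def frobenius_def genus_def)
qed

theorem mainTheorem4:
  fixes n :: nat
  assumes "n \<ge> 1"
  shows "card {G \<in> pure_sparse_gapsets (2 * n) (3 * n + 1). symmetric_gapset G} = 2 ^ (n - 1)"
proof -
  let ?I = "{2*n+2..3*n}"
  have "inj_on (sparse_symmetric_gapset n) (Pow ?I)"
    by (rule inj_on_inverseI[where g = "\<lambda>G. G \<inter> ?I"]) (use sparse_symmetric_gapset_Int in blast)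
  then have "card (sparse_symmetric_gapset n ` Pow ?I) = 2 ^ card ?I"
    by (simp add: card_image card_Pow)
  then show ?thesis
    using symmetric_pure_sparse_gapsets_eq_image[OF assms] by simp
qed

end
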